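(* Let $n\ge1$, $0\le k\le n$, and let $\mathfrak{g}$ be of type $A_n$. Then \[ \operatorname{ps}(\omega_n+\omega_k)=q^{\binom n2+\binom k2}\,[n-k+1]_q\begin{bmatrix}n+2\\ k\end{bmatrix}_q, \] where $\omega_0=0$.
   Context: For type $A_n$ ($\mathfrak{sl}_{n+1}$, or $\mathfrak{gl}_{n+1}$ polynomial representations) weights are written in $\epsilon_1,\dots,\epsilon_{n+1}$ with $\omega_k=\epsilon_1+\cdots+\epsilon_k$, so $\operatorname{ch}V(\lambda)$ is the Schur polynomial $s_\lambda(x_1,\dots,x_{n+1})$. The principal specialization is $\operatorname{ps}(\lambda)=s_\lambda(1,q,q^2,\dots,q^n)$. $[j]_q=1+\cdots+q^{j-1}$ and $\begin{bmatrix}a\\ b\end{bmatrix}_q$ is the Gaussian binomial coefficient. *)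

theory Defs
  imports "HOL-Library.FuncSet"
begin

text \<open>Weights of type A_n in epsilon coordinates: lists of length n+1.
  omega n k is the k-th fundamental weight eps_1 + ... + eps_k (omega n 0 = 0).\<close>
definition omega :: "nat \<Rightarrow> nat \<Rightarrow> nat list" where
  "omega n k = replicate k 1 @ replicate (n + 1 - k) 0"

definition wadd :: "nat list \<Rightarrow> nat list \<Rightarrow> nat list" where
  "wadd xs ys = map2 (+) xs ys"

definition young_cells :: "nat list \<Rightarrow> (nat \<times> nat) set" where
  "young_cells lam = {(i, j). i < length lam \<and> j < lam ! i}"

text \<open>Semistandard Young tableaux of shape lam with entries in {0..<N}
  (entry m stands for the variable x_(m+1)).\<close>
definition ssyt :: "nat \<Rightarrow> nat list \<Rightarrow> ((nat \<times> nat) \<Rightarrow> nat) set" where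
  "ssyt N lam = {T \<in> young_cells lam \<rightarrow>\<^sub>E {..<N}.
      (\<forall>i j. (i, j) \<in> young_cells lam \<and> (i, Suc j) \<in> young_cells lam \<longrightarrow> T (i, j) \<le> T (i, Suc j)) \<and>
      (\<forall>i j. (i, j) \<in> young_cells lam \<and> (Suc i, j) \<in> young_cells lam \<longrightarrow> T (i, j) < T (Suc i, j))}"

definition schur :: "nat \<Rightarrow> nat list \<Rightarrow> (nat \<Rightarrow> 'a::comm_semiring_1) \<Rightarrow> 'a" where
  "schur N lam x = (\<Sum>T\<in>ssyt N lam. \<Prod>c\<in>young_cells lam. x (T c))"

definition ps :: "nat \<Rightarrow> nat list \<Rightarrow> 'a::comm_semiring_1 \<Rightarrow> 'a" where
  "ps n lam q = schur (n + 1) lam (\<lambda>m. q ^ m)"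

definition qint :: "'a::comm_semiring_1 \<Rightarrow> nat \<Rightarrow> 'a" where
  "qint q j = (\<Sum>i<j. q ^ i)"

fun gbinom :: "'a::comm_semiring_1 \<Rightarrow> nat \<Rightarrow> nat \<Rightarrow> 'a" where
  "gbinom q a 0 = 1"
| "gbinom q 0 (Suc b) = 0"
| "gbinom q (Suc a) (Suc b) = gbinom q a b + q ^ Suc b * gbinom q a (Suc b)"

end

theory Submission
  imports Defs
begin

text \<open>
  A semistandard tableau of shape \<open>\<omega>\<^sub>n + \<omega>\<^sub>k\<close> with entries in \<open>{0..n}\<close> has two columns. The first,
  of length \<open>n\<close>, is \<open>{0..n}\<close> with a single value \<open>m\<close> omitted, contributing \<open>q^(C(n,2) + n - m)\<close>;
  the second is any strictly increasing \<open>g\<close> of length \<open>k\<close>, and the row condition says exactly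
  that \<open>g i > i\<close> for \<open>m \<le> i < k\<close>. Splitting the sequences \<open>g\<close> according to whether they
  use the value \<open>0\<close> gives q-Pascal type recursions in the number of available values, both
  for \<open>e\<^sub>k(1, q, ..., q^(N-1)) = q^C(k,2) [N choose k]\<^sub>q\<close> and for the sum over the pairs
  \<open>(g, m)\<close>; the latter is solved with the absorption identity
  \<open>[N+1]\<^sub>q [N choose k+1]\<^sub>q = [N-k]\<^sub>q [N+1 choose k+1]\<^sub>q\<close>.
\<close>

section \<open>q-integers and Gaussian binomial coefficients\<close>

lemma qint_0 [simp]: "qint q 0 = 0"
  by (simp add: qint_def)

lemma qint_Suc: "qint q (Suc j) = qint q j + q ^ j"
  by (simp add: qint_def)

lemma qint_Suc_left: "qint q (Suc j) = 1 + q * qint q j"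
  by (simp add: qint_def sum.lessThan_Suc_shift sum_distrib_left del: sum.lessThan_Suc)

lemma qint_add: "qint q (a + b) = qint q a + q ^ a * qint q b"
  by (induction b) (simp_all add: qint_Suc algebra_simps power_add)

lemma qint_eq_sum_rev: "qint q N = (\<Sum>m<N. q ^ (N - Suc m))"
  unfolding qint_def by (rule sum.nat_diff_reindex [symmetric])

lemma gbinom_eq_0: "a < b \<Longrightarrow> gbinom q a b = 0"
proof (induction a arbitrary: b)
  case 0
  then show ?case by (cases b) auto
next
  case (Suc a)
  then show ?case by (cases b) auto
qed

lemma gbinom_Suc_0: "gbinom q a (Suc 0) = qint q a"
  by (induction a) (simp_all add: qint_Suc_left)

lemma gbinom_absorb: "qint q (Suc j) * gbinom q a (Suc j) = qint q (a - j) * gbinom q a j"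
proof (induction a arbitrary: j)
  case 0
  show ?case by simp
next
  case (Suc a)
  note IH = Suc.IH
  show ?case
  proof (cases j)
    case 0
    then show ?thesis by (simp add: gbinom_Suc_0 qint_Suc)
  next
    case (Suc i)
    note j = this
    show ?thesis
    proof (cases "i < a")
      case False
      then show ?thesis using j by (simp add: gbinom_eq_0)
    next
      case True
      then obtain d where d: "a - i = Suc d" "a - Suc i = d"
        by (metis Suc_diff_Suc diff_Suc_Suc)
      have "qint q (Suc j) * gbinom q (Suc a) (Suc j)
          = qint q (Suc (Suc i)) * gbinom q a (Suc i)
            + q ^ Suc (Suc i) * (qint q d * gbinom q a (Suc i))"
        using IH[of "Suc i"] j d by (simp add: algebra_simps)
      also have "\<dots> = qint q (Suc i) * gbinom q a (Suc i)
            + q ^ Suc i * (qint q (Suc d) * gbinom q a (Suc i))"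
        by (simp only: qint_Suc[of q "Suc i"] qint_Suc_left[of q d]) (simp add: algebra_simps)
      also have "\<dots> = qint q (Suc a - j) * gbinom q (Suc a) j"
        using IH[of i] j d by (simp add: algebra_simps)
      finally show ?thesis .
    qed
  qed
qed

lemma gbinom_absorb_Suc:
  "qint q (Suc N) * gbinom q N (Suc k) = qint q (N - k) * gbinom q (Suc N) (Suc k)"
proof (cases "k < N")
  case False
  then show ?thesis by (simp add: gbinom_eq_0)
next
  case True
  have "qint q (N - k) * gbinom q (Suc N) (Suc k)
      = qint q (Suc (Suc k)) * gbinom q N (Suc k)
        + q ^ Suc (Suc k) * (qint q (Suc (Suc k)) * gbinom q N (Suc (Suc k)))"
    using gbinom_absorb[of q "Suc k" "Suc N"] by (simp add: algebra_simps)
  also have "\<dots> = (qint q (Suc (Suc k)) + q ^ Suc (Suc k) * qint q (N - Suc k)) * gbinom q N (Suc k)"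
    by (simp only: gbinom_absorb) (simp add: algebra_simps)
  also have "qint q (Suc (Suc k)) + q ^ Suc (Suc k) * qint q (N - Suc k) = qint q (Suc N)"
    using qint_add[of q "Suc (Suc k)" "N - Suc k"] True by simp
  finally show ?thesis by simp
qed

section \<open>Strictly increasing sequences\<close>

definition strict_seqs :: "nat \<Rightarrow> nat \<Rightarrow> (nat \<Rightarrow> nat) set" where
  "strict_seqs N k = {g \<in> {..<k} \<rightarrow>\<^sub>E {..<N}. \<forall>i. Suc i < k \<longrightarrow> g i < g (Suc i)}"

definition seq_weight :: "'a::comm_semiring_1 \<Rightarrow> nat \<Rightarrow> (nat \<Rightarrow> nat) \<Rightarrow> 'a" where
  "seq_weight q k g = (\<Prod>i<k. q ^ g i)"

lemma increasing_gap:
  fixes h :: "nat \<Rightarrow> nat"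
  assumes "\<And>i. Suc i < L \<Longrightarrow> h i < h (Suc i)" and "i \<le> j" and "j < L"
  shows "h i + (j - i) \<le> h j"
  using assms(2,3)
proof (induction j)
  case 0
  then show ?case by simp
next
  case (Suc j)
  then show ?case
    using assms(1)[of j] by (auto simp: Suc_diff_le le_Suc_eq)
qed

lemma strict_seqs_ge: "g \<in> strict_seqs N k \<Longrightarrow> i < k \<Longrightarrow> g 0 + i \<le> g i"
  using increasing_gap[of k g 0 i] unfolding strict_seqs_def by auto

lemma finite_strict_seqs: "finite (strict_seqs N k)"
  by (rule finite_subset[of _ "{..<k} \<rightarrow>\<^sub>E {..<N}"]) (auto simp: strict_seqs_def finite_PiE)

lemma strict_seqs_0: "strict_seqs N 0 = {\<lambda>_. undefined}"
  by (auto simp: strict_seqs_def)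

lemma strict_seqs_0_Suc: "strict_seqs 0 (Suc k) = {}"
  by (auto simp: strict_seqs_def PiE_eq_empty_iff)

definition shift_seq :: "nat \<Rightarrow> (nat \<Rightarrow> nat) \<Rightarrow> nat \<Rightarrow> nat" where
  "shift_seq k g = restrict (\<lambda>i. Suc (g i)) {..<k}"

definition cons0_seq :: "nat \<Rightarrow> (nat \<Rightarrow> nat) \<Rightarrow> nat \<Rightarrow> nat" where
  "cons0_seq k g = restrict (\<lambda>i. if i = 0 then 0 else Suc (g (i - 1))) {..<Suc k}"

lemma bij_betw_shift_seq:
  "bij_betw (shift_seq (Suc k)) (strict_seqs N (Suc k)) {g \<in> strict_seqs (Suc N) (Suc k). g 0 \<noteq> 0}"
proof (rule bij_betw_byWitness[where f' = "\<lambda>g. restrict (\<lambda>i. g i - 1) {..<Suc k}"])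
  have pos: "0 < g i" if "g \<in> strict_seqs (Suc N) (Suc k)" "g 0 \<noteq> 0" "i < Suc k" for g i
    using strict_seqs_ge[OF that(1,3)] that(2) by simp
  show "\<forall>g\<in>strict_seqs N (Suc k). restrict (\<lambda>i. shift_seq (Suc k) g i - 1) {..<Suc k} = g"
    by (auto simp: strict_seqs_def shift_seq_def fun_eq_iff PiE_iff extensional_def)
  show "\<forall>g\<in>{g \<in> strict_seqs (Suc N) (Suc k). g 0 \<noteq> 0}. shift_seq (Suc k) (restrict (\<lambda>i. g i - 1) {..<Suc k}) = g"
    using pos by (auto simp: strict_seqs_def shift_seq_def fun_eq_iff PiE_iff extensional_def)
  show "shift_seq (Suc k) ` strict_seqs N (Suc k) \<subseteq> {g \<in> strict_seqs (Suc N) (Suc k). g 0 \<noteq> 0}"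
    by (auto simp: strict_seqs_def shift_seq_def PiE_iff)
  show "(\<lambda>g. restrict (\<lambda>i. g i - 1) {..<Suc k}) ` {g \<in> strict_seqs (Suc N) (Suc k). g 0 \<noteq> 0} \<subseteq> strict_seqs N (Suc k)"
    using pos by (fastforce simp: strict_seqs_def PiE_iff less_diff_conv2 Suc_le_eq)
qed

lemma bij_betw_cons0_seq:
  "bij_betw (cons0_seq k) (strict_seqs N k) {g \<in> strict_seqs (Suc N) (Suc k). g 0 = 0}"
proof (rule bij_betw_byWitness[where f' = "\<lambda>g. restrict (\<lambda>i. g (Suc i) - 1) {..<k}"])
  have pos: "0 < g (Suc i)" if "g \<in> strict_seqs (Suc N) (Suc k)" "i < k" for g i
    using strict_seqs_ge[OF that(1), of "Suc i"] that(2) by simp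
  show "\<forall>g\<in>strict_seqs N k. restrict (\<lambda>i. cons0_seq k g (Suc i) - 1) {..<k} = g"
    by (auto simp: strict_seqs_def cons0_seq_def fun_eq_iff PiE_iff extensional_def)
  show "\<forall>g\<in>{g \<in> strict_seqs (Suc N) (Suc k). g 0 = 0}. cons0_seq k (restrict (\<lambda>i. g (Suc i) - 1) {..<k}) = g"
    using pos by (auto simp: strict_seqs_def cons0_seq_def fun_eq_iff PiE_iff extensional_def split: nat.split)
  show "cons0_seq k ` strict_seqs N k \<subseteq> {g \<in> strict_seqs (Suc N) (Suc k). g 0 = 0}"
    by (auto simp: strict_seqs_def cons0_seq_def PiE_iff gr0_conv_Suc)
  show "(\<lambda>g. restrict (\<lambda>i. g (Suc i) - 1) {..<k}) ` {g \<in> strict_seqs (Suc N) (Suc k). g 0 = 0} \<subseteq> strict_seqs N k"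
    using pos by (fastforce simp: strict_seqs_def PiE_iff less_diff_conv2 Suc_le_eq)
qed

lemma choose_two_Suc: "Suc k choose 2 = (k choose 2) + k"
  by (simp add: numeral_2_eq_2)

lemma sum_strict_seqs_Suc:
  "(\<Sum>g\<in>strict_seqs (Suc N) (Suc k). F g)
    = (\<Sum>g\<in>strict_seqs N (Suc k). F (shift_seq (Suc k) g)) + (\<Sum>g\<in>strict_seqs N k. F (cons0_seq k g))"
proof -
  let ?P = "{g \<in> strict_seqs (Suc N) (Suc k). g 0 \<noteq> 0}" and ?Z = "{g \<in> strict_seqs (Suc N) (Suc k). g 0 = 0}"
  have "(\<Sum>g\<in>strict_seqs (Suc N) (Suc k). F g) = (\<Sum>g\<in>?P \<union> ?Z. F g)"
    by (rule sum.cong) auto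
  also have "\<dots> = (\<Sum>g\<in>?P. F g) + (\<Sum>g\<in>?Z. F g)"
    by (rule sum.union_disjoint) (auto intro: finite_subset[OF _ finite_strict_seqs])
  finally show ?thesis
    by (simp only: sum.reindex_bij_betw[OF bij_betw_shift_seq] sum.reindex_bij_betw[OF bij_betw_cons0_seq])
qed

lemma seq_weight_shift_seq: "seq_weight q k (shift_seq k g) = q ^ k * seq_weight q k g"
  by (simp add: seq_weight_def shift_seq_def prod.distrib)

lemma seq_weight_cons0_seq: "seq_weight q (Suc k) (cons0_seq k g) = q ^ k * seq_weight q k g"
  by (simp add: seq_weight_def cons0_seq_def prod.lessThan_Suc_shift prod.distrib del: prod.lessThan_Suc)

definition esym_powers :: "'a::comm_semiring_1 \<Rightarrow> nat \<Rightarrow> nat \<Rightarrow> 'a" where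
  "esym_powers q N k = (\<Sum>g\<in>strict_seqs N k. seq_weight q k g)"

lemma esym_powers_Suc_Suc:
  "esym_powers q (Suc N) (Suc k) = q ^ Suc k * esym_powers q N (Suc k) + q ^ k * esym_powers q N k"
  unfolding esym_powers_def sum_strict_seqs_Suc seq_weight_shift_seq seq_weight_cons0_seq
  by (simp add: sum_distrib_left)

lemma esym_powers_eq: "esym_powers q N k = q ^ (k choose 2) * gbinom q N k"
proof (induction N arbitrary: k)
  case 0
  then show ?case
    by (cases k) (simp_all add: esym_powers_def strict_seqs_0 strict_seqs_0_Suc seq_weight_def binomial_eq_0)
next
  case (Suc N)
  note IH = Suc.IH
  show ?case
  proof (cases k)
    case 0
    then show ?thesis by (simp add: esym_powers_def strict_seqs_0 seq_weight_def binomial_eq_0)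
  next
    case (Suc j)
    then show ?thesis
      by (simp add: esym_powers_Suc_Suc choose_two_Suc IH power_add algebra_simps)
  qed
qed

text \<open>A strictly increasing \<open>g\<close> satisfies \<open>g i \<ge> i\<close>, so this says \<open>g i > i\<close> for \<open>m \<le> i < k\<close>.\<close>

definition off_diagonal_from :: "nat \<Rightarrow> nat \<Rightarrow> (nat \<Rightarrow> nat) \<Rightarrow> bool" where
  "off_diagonal_from k m g \<longleftrightarrow> (\<forall>i<k. m \<le> i \<longrightarrow> g i \<noteq> i)"

definition gap_weight :: "'a::comm_semiring_1 \<Rightarrow> nat \<Rightarrow> nat \<Rightarrow> (nat \<Rightarrow> nat) \<Rightarrow> 'a" where
  "gap_weight q N k g = (\<Sum>m | m < N \<and> off_diagonal_from k m g. q ^ (N - Suc m))"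

text \<open>For \<open>N = n + 1\<close> this is \<open>ps(\<omega>\<^sub>n + \<omega>\<^sub>k) / q^C(n,2)\<close>, with \<open>m\<close> the value missing from the
  first column of the tableau.\<close>

definition gap_sum :: "'a::comm_semiring_1 \<Rightarrow> nat \<Rightarrow> nat \<Rightarrow> 'a" where
  "gap_sum q N k = (\<Sum>g\<in>strict_seqs N k. gap_weight q N k g * seq_weight q k g)"

lemma gap_weight_shift_seq:
  assumes "g \<in> strict_seqs N k"
  shows "gap_weight q (Suc N) k (shift_seq k g) = qint q (Suc N)"
proof -
  have "off_diagonal_from k m (shift_seq k g)" for m
    using strict_seqs_ge[OF assms] by (fastforce simp: off_diagonal_from_def shift_seq_def)
  then show ?thesis
    by (simp add: gap_weight_def qint_eq_sum_rev lessThan_def)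
qed

lemma off_diagonal_from_cons0_seq:
  "off_diagonal_from (Suc k) m (cons0_seq k g) \<longleftrightarrow> (\<exists>m'. m = Suc m' \<and> off_diagonal_from k m' g)"
  by (cases m) (auto simp: off_diagonal_from_def cons0_seq_def All_less_Suc2 Suc_le_eq)

lemma gap_weight_cons0_seq: "gap_weight q (Suc N) (Suc k) (cons0_seq k g) = gap_weight q N k g"
proof -
  have "{m. m < Suc N \<and> off_diagonal_from (Suc k) m (cons0_seq k g)}
      = Suc ` {m. m < N \<and> off_diagonal_from k m g}"
    by (auto simp: off_diagonal_from_cons0_seq)
  then show ?thesis
    by (simp add: gap_weight_def sum.reindex)
qed

lemma gap_sum_Suc_Suc:
  "gap_sum q (Suc N) (Suc k) = qint q (Suc N) * q ^ Suc k * esym_powers q N (Suc k) + q ^ k * gap_sum q N k"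
  unfolding gap_sum_def esym_powers_def sum_strict_seqs_Suc seq_weight_shift_seq seq_weight_cons0_seq
    gap_weight_cons0_seq
  by (simp add: gap_weight_shift_seq sum_distrib_left algebra_simps)

lemma gap_sum_eq: "gap_sum q N k = q ^ (k choose 2) * qint q (N - k) * gbinom q (Suc N) k"
proof (induction N arbitrary: k)
  case 0
  then show ?case
    by (cases k) (simp_all add: gap_sum_def strict_seqs_0 strict_seqs_0_Suc gap_weight_def)
next
  case (Suc N)
  note IH = Suc.IH
  show ?case
  proof (cases k)
    case 0
    then show ?thesis
      by (simp add: gap_sum_def strict_seqs_0 seq_weight_def gap_weight_def off_diagonal_from_def
          qint_eq_sum_rev lessThan_def binomial_eq_0 del: sum.lessThan_Suc)
  next
    case (Suc j)
    have "gap_sum q (Suc N) k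
        = q ^ Suc j * q ^ (Suc j choose 2) * (qint q (Suc N) * gbinom q N (Suc j))
          + q ^ j * (q ^ (j choose 2) * qint q (N - j) * gbinom q (Suc N) j)"
      using Suc by (simp add: gap_sum_Suc_Suc esym_powers_eq IH algebra_simps)
    also have "\<dots> = q ^ (k choose 2) * qint q (Suc N - k) * gbinom q (Suc (Suc N)) k"
      using Suc by (simp add: gbinom_absorb_Suc choose_two_Suc power_add algebra_simps)
    finally show ?thesis .
  qed
qed

section \<open>Two-column tableaux\<close>

definition skip :: "nat \<Rightarrow> nat \<Rightarrow> nat" where
  "skip m i = (if i < m then i else Suc i)"

lemma sum_skip: "(\<Sum>i<n. skip m i) = (n choose 2) + (n - m)"
  by (induction n) (auto simp: skip_def choose_two_Suc)

lemma skip_eqD: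
  assumes "m \<le> n" "m' \<le> n" and "\<And>i. i < n \<Longrightarrow> skip m i = skip m' i"
  shows "m = m'"
proof (rule ccontr)
  assume "m \<noteq> m'"
  define i where "i = min m m'"
  have "i < n" and "skip m i \<noteq> skip m' i"
    using assms(1,2) \<open>m \<noteq> m'\<close> by (auto simp: i_def skip_def min_def)
  then show False
    using assms(3) by blast
qed

lemma strict_seq_eq_skip:
  fixes f :: "nat \<Rightarrow> nat"
  assumes incr: "\<And>i. Suc i < n \<Longrightarrow> f i < f (Suc i)" and bound: "\<And>i. i < n \<Longrightarrow> f i \<le> n"
  obtains m where "m \<le> n" and "\<And>i. i < n \<Longrightarrow> f i = skip m i"
proof -
  note gap = increasing_gap[of n f, OF incr]
  have ge: "i \<le> f i" if "i < n" for i
    using gap[of 0 i] that by simp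
  have le: "f i \<le> Suc i" if "i < n" for i
    using gap[of i "n - 1"] bound[of "n - 1"] that by linarith
  define m where "m = (LEAST m. m = n \<or> f m \<noteq> m)"
  have "m \<le> n"
    unfolding m_def by (rule Least_le) simp
  moreover have "f i = skip m i" if i: "i < n" for i
  proof (cases "i < m")
    case True
    then show ?thesis
      using not_less_Least[of i "\<lambda>m. m = n \<or> f m \<noteq> m"] i by (simp add: m_def skip_def)
  next
    case False
    then have "m < n" and "f m \<noteq> m"
      using i LeastI[of "\<lambda>m. m = n \<or> f m \<noteq> m" n] by (auto simp: m_def)
    then have "f m = Suc m"
      using ge[of m] le[of m] by linarith
    then show ?thesis
      using gap[of m i] le[OF i] False i by (simp add: skip_def)
  qed
  ultimately show ?thesis
    using that by blast
qed

definition two_column_cells :: "nat \<Rightarrow> nat \<Rightarrow> (nat \<times> nat) set" where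
  "two_column_cells n k = {(i, j). (j = 0 \<and> i < n) \<or> (j = Suc 0 \<and> i < k)}"

lemma young_cells_omega_n_omega_k:
  assumes "k \<le> n"
  shows "young_cells (wadd (omega n n) (omega n k)) = two_column_cells n k"
proof -
  have "wadd (omega n n) (omega n k) ! i = (if i < n then 1 else 0) + (if i < k then 1 else 0)"
    if "i < Suc n" for i
    using that assms by (simp add: wadd_def omega_def nth_append)
  then show ?thesis
    using assms by (auto simp: young_cells_def two_column_cells_def wadd_def omega_def split: if_splits)
qed

lemma ssyt_two_columns_iff:
  assumes "k \<le> n"
  shows "T \<in> ssyt (Suc n) (wadd (omega n n) (omega n k)) \<longleftrightarrow>
    T \<in> two_column_cells n k \<rightarrow>\<^sub>E {..<Suc n} \<and>
    (\<forall>i<k. T (i, 0) \<le> T (i, Suc 0)) \<and>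
    (\<forall>i. Suc i < n \<longrightarrow> T (i, 0) < T (Suc i, 0)) \<and>
    (\<forall>i. Suc i < k \<longrightarrow> T (i, Suc 0) < T (Suc i, Suc 0))"
  using assms by (auto simp: ssyt_def young_cells_omega_n_omega_k two_column_cells_def)

definition gap_pairs :: "nat \<Rightarrow> nat \<Rightarrow> ((nat \<Rightarrow> nat) \<times> nat) set" where
  "gap_pairs N k = (SIGMA g:strict_seqs N k. {m. m < N \<and> off_diagonal_from k m g})"

definition two_column_tableau :: "nat \<Rightarrow> nat \<Rightarrow> (nat \<Rightarrow> nat) \<times> nat \<Rightarrow> nat \<times> nat \<Rightarrow> nat" where
  "two_column_tableau n k =
     (\<lambda>(g, m). restrict (\<lambda>(i, j). if j = 0 then skip m i else g i) (two_column_cells n k))"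

lemma two_column_tableau_0: "i < n \<Longrightarrow> two_column_tableau n k (g, m) (i, 0) = skip m i"
  by (simp add: two_column_tableau_def two_column_cells_def)

lemma two_column_tableau_1: "i < k \<Longrightarrow> two_column_tableau n k (g, m) (i, Suc 0) = g i"
  by (simp add: two_column_tableau_def two_column_cells_def)

lemma two_column_tableau_in_ssyt:
  assumes "k \<le> n" and "x \<in> gap_pairs (Suc n) k"
  shows "two_column_tableau n k x \<in> ssyt (Suc n) (wadd (omega n n) (omega n k))"
proof -
  obtain g m where x: "x = (g, m)" and g: "g \<in> strict_seqs (Suc n) k"
    and "m < Suc n" and off: "off_diagonal_from k m g"
    using assms(2) by (auto simp: gap_pairs_def)
  let ?T = "two_column_tableau n k (g, m)"
  have "?T \<in> two_column_cells n k \<rightarrow>\<^sub>E {..<Suc n}"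
    using g by (auto simp: two_column_tableau_def two_column_cells_def strict_seqs_def PiE_iff skip_def)
  moreover have "skip m i \<le> g i" if "i < k" for i
    using strict_seqs_ge[OF g that] off that by (auto simp: skip_def off_diagonal_from_def)
  then have "\<forall>i<k. ?T (i, 0) \<le> ?T (i, Suc 0)"
    using assms(1) by (simp add: two_column_tableau_0 two_column_tableau_1)
  moreover have "\<forall>i. Suc i < n \<longrightarrow> ?T (i, 0) < ?T (Suc i, 0)"
    by (simp add: two_column_tableau_0 skip_def)
  moreover have "\<forall>i. Suc i < k \<longrightarrow> ?T (i, Suc 0) < ?T (Suc i, Suc 0)"
    using g by (simp add: two_column_tableau_1 strict_seqs_def)
  ultimately show ?thesis
    unfolding x ssyt_two_columns_iff[OF assms(1)] by blast
qed

lemma inj_on_two_column_tableau: "inj_on (two_column_tableau n k) (gap_pairs (Suc n) k)"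
proof (rule inj_onI)
  fix x y
  assume "x \<in> gap_pairs (Suc n) k" "y \<in> gap_pairs (Suc n) k"
    and eq: "two_column_tableau n k x = two_column_tableau n k y"
  then obtain g m g' m' where xy: "x = (g, m)" "y = (g', m')" and "m \<le> n" "m' \<le> n"
    and "g \<in> extensional {..<k}" "g' \<in> extensional {..<k}"
    by (auto simp: gap_pairs_def strict_seqs_def PiE_def)
  moreover have "m = m'"
  proof (rule skip_eqD[OF \<open>m \<le> n\<close> \<open>m' \<le> n\<close>])
    fix i
    assume "i < n"
    then show "skip m i = skip m' i"
      using fun_cong[OF eq, of "(i, 0)"] by (simp add: xy two_column_tableau_0)
  qed
  moreover have "g = g'"
  proof (rule extensionalityI[OF \<open>g \<in> _\<close> \<open>g' \<in> _\<close>])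
    fix i
    assume "i \<in> {..<k}"
    then show "g i = g' i"
      using fun_cong[OF eq, of "(i, Suc 0)"] by (simp add: xy two_column_tableau_1)
  qed
  ultimately show "x = y"
    by simp
qed

lemma ssyt_subset_two_column_tableau_image:
  assumes "k \<le> n"
  shows "ssyt (Suc n) (wadd (omega n n) (omega n k)) \<subseteq> two_column_tableau n k ` gap_pairs (Suc n) k"
proof
  fix T
  assume "T \<in> ssyt (Suc n) (wadd (omega n n) (omega n k))"
  then have T: "T \<in> two_column_cells n k \<rightarrow>\<^sub>E {..<Suc n}"
    and row: "\<And>i. i < k \<Longrightarrow> T (i, 0) \<le> T (i, Suc 0)"
    and col0: "\<And>i. Suc i < n \<Longrightarrow> T (i, 0) < T (Suc i, 0)"
    and col1: "\<And>i. Suc i < k \<Longrightarrow> T (i, Suc 0) < T (Suc i, Suc 0)"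
    by (simp_all add: ssyt_two_columns_iff[OF assms])
  have bound: "T (i, j) < Suc n" if "(i, j) \<in> two_column_cells n k" for i j
    using PiE_mem[OF T that] by simp
  have "T (i, 0) \<le> n" if "i < n" for i
    using bound[of i 0] that by (simp add: two_column_cells_def)
  then obtain m where "m \<le> n" and first: "\<And>i. i < n \<Longrightarrow> T (i, 0) = skip m i"
    using strict_seq_eq_skip[of n "\<lambda>i. T (i, 0)", OF col0] by blast
  define g where "g = restrict (\<lambda>i. T (i, Suc 0)) {..<k}"
  have "g \<in> strict_seqs (Suc n) k"
    using bound col1 by (simp add: strict_seqs_def g_def two_column_cells_def)
  moreover have "off_diagonal_from k m g"
    using row first assms by (fastforce simp: off_diagonal_from_def g_def skip_def)
  ultimately have "(g, m) \<in> gap_pairs (Suc n) k"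
    using \<open>m \<le> n\<close> by (simp add: gap_pairs_def)
  moreover have "T = two_column_tableau n k (g, m)"
  proof (rule extensionalityI[of _ "two_column_cells n k"])
    show "T \<in> extensional (two_column_cells n k)"
      using T by (simp add: PiE_iff)
    show "two_column_tableau n k (g, m) \<in> extensional (two_column_cells n k)"
      by (simp add: two_column_tableau_def)
    fix c
    assume "c \<in> two_column_cells n k"
    then show "T c = two_column_tableau n k (g, m) c"
      using first by (auto simp: two_column_cells_def two_column_tableau_0 two_column_tableau_1 g_def)
  qed
  ultimately show "T \<in> two_column_tableau n k ` gap_pairs (Suc n) k"
    by blast
qed

lemma prod_two_column_tableau:
  "(\<Prod>c\<in>two_column_cells n k. q ^ two_column_tableau n k (g, m) c)
    = q ^ (n choose 2) * q ^ (n - m) * seq_weight q k g"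
proof -
  let ?P = "\<lambda>c. q ^ two_column_tableau n k (g, m) c"
  have cells: "two_column_cells n k = (\<lambda>i. (i, 0)) ` {..<n} \<union> (\<lambda>i. (i, Suc 0)) ` {..<k}"
    by (auto simp: two_column_cells_def)
  have "prod ?P (two_column_cells n k) = prod ?P ((\<lambda>i. (i, 0)) ` {..<n}) * prod ?P ((\<lambda>i. (i, Suc 0)) ` {..<k})"
    unfolding cells by (rule prod.union_disjoint) auto
  also have "prod ?P ((\<lambda>i. (i, 0)) ` {..<n}) = q ^ (\<Sum>i<n. skip m i)"
    by (simp add: prod.reindex inj_on_def two_column_tableau_0 power_sum)
  also have "prod ?P ((\<lambda>i. (i, Suc 0)) ` {..<k}) = seq_weight q k g"
    by (simp add: prod.reindex inj_on_def two_column_tableau_1 seq_weight_def)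
  finally show ?thesis
    by (simp add: sum_skip power_add)
qed

theorem proposition5p25:
  fixes n k :: nat and q :: "'a::comm_ring_1"
  assumes "1 \<le> n" and "k \<le> n"
  shows "ps n (wadd (omega n n) (omega n k)) q
         = q ^ ((n choose 2) + (k choose 2)) * qint q (n - k + 1) * gbinom q (n + 2) k"
proof -
  let ?T = "two_column_tableau n k"
  have ssyt: "ssyt (Suc n) (wadd (omega n n) (omega n k)) = ?T ` gap_pairs (Suc n) k"
    using ssyt_subset_two_column_tableau_image two_column_tableau_in_ssyt assms(2) by blast
  have "ps n (wadd (omega n n) (omega n k)) q
      = (\<Sum>x\<in>gap_pairs (Suc n) k. \<Prod>c\<in>two_column_cells n k. q ^ ?T x c)"
    by (simp add: ps_def schur_def ssyt young_cells_omega_n_omega_k[OF assms(2)]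
        sum.reindex[OF inj_on_two_column_tableau])
  also have "\<dots> = (\<Sum>(g, m)\<in>gap_pairs (Suc n) k. q ^ (n choose 2) * q ^ (n - m) * seq_weight q k g)"
    by (rule sum.cong) (auto simp: prod_two_column_tableau)
  also have "\<dots> = q ^ (n choose 2) * gap_sum q (Suc n) k"
    by (simp add: gap_pairs_def gap_sum_def gap_weight_def sum.Sigma[symmetric] finite_strict_seqs
        sum_distrib_left sum_distrib_right mult.assoc)
  finally show ?thesis
    using assms(2) by (simp add: gap_sum_eq power_add Suc_diff_le algebra_simps)
qed

end
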